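(* For any group $H$, the set $\mathcal E_H=\{G\in\mathcal G:\ H\text{ is embeddable into }\overline G\}$ is analytic in $\mathcal G$; therefore it is either meager or comeager in $\mathcal G$.
   Context: Let $\mathbb N=\{1,2,3,\dots\}$. Equip $\mathbb N^{\mathbb N\times\mathbb N}$ with the product topology of the discrete topology on $\mathbb N$. Let $\mathcal G$ be the (Polish) subspace consisting of those $A\in\mathbb N^{\mathbb N\times\mathbb N}$ that are the multiplication table of a group on the underlying set $\mathbb N$ whose identity element is $1$. For $G\in\mathcal G$, $\overline G$ denotes the group on $\mathbb N$ with multiplication table $G$. A subset of a Polish space $Y$ is analytic if it is a continuous image of a Borel subset of a Polish space. *)

theory Defs
  imports "HOL-Analysis.Analysis" "HOL-Algebra.Group"
begin

text \<open>Encoding: the paper's underlying set N = {1,2,3,...} is represented by the type nat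
  via the bijection n |-> n - 1; so the paper's identity 1 becomes 0 here.
  The space N^(N x N) is the function type (nat \<times> nat \<Rightarrow> nat), whose topology
  (Function_Topology) is the product topology, nat carrying its (discrete) order topology.\<close>

definition table_group :: "(nat \<times> nat \<Rightarrow> nat) \<Rightarrow> nat monoid" where
  "table_group A = \<lparr>carrier = UNIV, mult = (\<lambda>x y. A (x, y)), one = 0\<rparr>"

definition group_tables :: "(nat \<times> nat \<Rightarrow> nat) set" where
  "group_tables = {A. group (table_group A)}"

definition embeddable :: "('h, 'c) monoid_scheme \<Rightarrow> ('g, 'd) monoid_scheme \<Rightarrow> bool" where
  "embeddable H G \<longleftrightarrow> (\<exists>f. f \<in> hom H G \<and> inj_on f (carrier H))"

definition Polish_space :: "'a topology \<Rightarrow> bool" where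
  "Polish_space X \<longleftrightarrow> completely_metrizable_space X \<and> separable_space X"

definition borel_sets_of :: "'a topology \<Rightarrow> 'a set set" where
  "borel_sets_of X = sigma_sets (topspace X) {U. openin X U}"

text \<open>Every Polish space is homeomorphic to a (closed) subspace of R^N, so it suffices to
  range over Polish topologies whose points lie in the type nat \<Rightarrow> real.\<close>
definition analytic_in :: "'b topology \<Rightarrow> 'b set \<Rightarrow> bool" where
  "analytic_in Y S \<longleftrightarrow>
     (\<exists>(X :: (nat \<Rightarrow> real) topology) B f.
        Polish_space X \<and> B \<in> borel_sets_of X \<and>
        continuous_map (subtopology X B) Y f \<and> f ` B = S)"

definition nowhere_dense_in :: "'a topology \<Rightarrow> 'a set \<Rightarrow> bool" where
  "nowhere_dense_in X A \<longleftrightarrow> A \<subseteq> topspace X \<and> X interior_of (X closure_of A) = {}"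

definition meager_in :: "'a topology \<Rightarrow> 'a set \<Rightarrow> bool" where
  "meager_in X A \<longleftrightarrow> A \<subseteq> topspace X \<and>
     (\<exists>F. countable F \<and> (\<forall>N\<in>F. nowhere_dense_in X N) \<and> A \<subseteq> \<Union>F)"

definition comeager_in :: "'a topology \<Rightarrow> 'a set \<Rightarrow> bool" where
  "comeager_in X A \<longleftrightarrow> A \<subseteq> topspace X \<and> meager_in X (topspace X - A)"

end

theory Submission
  imports Defs "HOL-Combinatorics.Transposition"
begin

text \<open>
  An uncountable group embeds into no group on \<open>\<nat>\<close>, so assume that \<open>H\<close> is enumerated as
  \<open>e 0, e 1, \<dots>\<close>. A table \<open>G\<close> lies in \<open>E\<close> iff some sequence \<open>x\<close> (the images of
  the \<open>e i\<close>) satisfies countably many conditions, each depending on finitely many entries of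
  \<open>G\<close> and \<open>x\<close>. Hence \<open>E\<close> is the projection of a \<open>G\<^sub>\<delta>\<close> subset of a Baire space,
  so it is analytic; and it is the result of the Souslin operation applied to the sets of tables
  admitting such an \<open>x\<close> with a prescribed initial segment, so it has the Baire property.
  Finally \<open>E\<close> is invariant under relabelling tables by permutations of \<open>\<nat>\<close> fixing the
  identity, and this action is topologically transitive, since two tables embed into their
  direct product. By the topological zero-one law, \<open>E\<close> is meager or comeager.
\<close>

section \<open>Meager sets\<close>

lemma meager_in_empty: "meager_in Y {}"
  unfolding meager_in_def by (intro conjI exI[of _ "{}"]) simp_all

lemma meager_in_subset: "meager_in Y B \<Longrightarrow> A \<subseteq> B \<Longrightarrow> meager_in Y A"
  unfolding meager_in_def by (metis subset_trans)

lemma meager_in_Union: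
  assumes "countable \<A>" "\<And>A. A \<in> \<A> \<Longrightarrow> meager_in Y A"
  shows "meager_in Y (\<Union>\<A>)"
proof -
  obtain F where F: "\<And>A. A \<in> \<A> \<Longrightarrow>
      A \<subseteq> topspace Y \<and> countable (F A) \<and> (\<forall>N\<in>F A. nowhere_dense_in Y N) \<and> A \<subseteq> \<Union>(F A)"
    using assms(2) unfolding meager_in_def by metis
  show ?thesis
    unfolding meager_in_def
  proof (intro conjI exI[of _ "\<Union>A\<in>\<A>. F A"])
    show "\<Union>\<A> \<subseteq> topspace Y" using F by (simp add: Sup_le_iff)
    show "countable (\<Union>A\<in>\<A>. F A)" using assms(1) F by simp
    show "\<forall>N\<in>\<Union>A\<in>\<A>. F A. nowhere_dense_in Y N" using F by simp
    show "\<Union>\<A> \<subseteq> \<Union>(\<Union>A\<in>\<A>. F A)"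
      using F by (simp add: Sup_le_iff) (meson UN_upper Union_mono order_trans)
  qed
qed

lemma meager_in_UN:
  "countable I \<Longrightarrow> (\<And>i. i \<in> I \<Longrightarrow> meager_in Y (A i)) \<Longrightarrow> meager_in Y (\<Union>i\<in>I. A i)"
  by (rule meager_in_Union) auto

lemma meager_in_Un: "meager_in Y A \<Longrightarrow> meager_in Y B \<Longrightarrow> meager_in Y (A \<union> B)"
  using meager_in_Union[of "{A, B}" Y] by auto

lemma nowhere_dense_imp_meager_in: "nowhere_dense_in Y A \<Longrightarrow> meager_in Y A"
  unfolding meager_in_def by (intro conjI exI[of _ "{A}"]) (simp_all add: nowhere_dense_in_def)

lemma nowhere_dense_in_closedin:
  "closedin Y C \<Longrightarrow> Y interior_of C = {} \<Longrightarrow> nowhere_dense_in Y C"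
  by (simp add: nowhere_dense_in_def closure_of_closedin closedin_subset)

lemma nowhere_dense_in_frontier:
  assumes "closedin Y C"
  shows "nowhere_dense_in Y (C - Y interior_of C)"
proof (rule nowhere_dense_in_closedin)
  show "closedin Y (C - Y interior_of C)"
    using assms by (simp add: closedin_diff)
  show "Y interior_of (C - Y interior_of C) = {}"
  proof (clarsimp simp: interior_of_eq_empty)
    fix W assume W: "openin Y W" "W \<subseteq> C - Y interior_of C"
    then have "W \<subseteq> Y interior_of C" by (meson Diff_subset interior_of_maximal order_trans)
    then show "W = {}" using W(2) by blast
  qed
qed

lemma nowhere_dense_in_Int_closedin:
  assumes "openin Y V" "V \<subseteq> Y closure_of Z" "closedin Y F" "Z \<inter> F = {}"
  shows "nowhere_dense_in Y (V \<inter> F)"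
  unfolding nowhere_dense_in_def interior_of_eq_empty
proof (intro conjI allI impI)
  show "V \<inter> F \<subseteq> topspace Y" using closedin_subset[OF assms(3)] by blast
  fix W assume W: "openin Y W \<and> W \<subseteq> Y closure_of (V \<inter> F)"
  have "W \<subseteq> F"
    using W closure_of_minimal[OF _ assms(3), of "V \<inter> F"] by blast
  moreover have "W \<inter> V = {} \<longleftrightarrow> W = {}"
    using W openin_Int_closure_of_eq_empty[of Y W V] closure_of_mono[of "V \<inter> F" V Y] by blast
  moreover have "W \<inter> V \<inter> Z = {}"
    using \<open>W \<subseteq> F\<close> assms(4) by blast
  ultimately show "W = {}"
    using openin_Int_closure_of_eq_empty[of Y "W \<inter> V" Z] W assms(1,2) by blast
qed

lemma completely_metrizable_imp_nonempty_open_not_meager: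
  assumes Y: "completely_metrizable_space Y" and U: "openin Y U" "U \<noteq> {}"
  shows "\<not> meager_in Y U"
proof
  assume "meager_in Y U"
  then obtain F where F: "countable F" "\<And>N. N \<in> F \<Longrightarrow> nowhere_dense_in Y N" "U \<subseteq> \<Union>F"
    unfolding meager_in_def by metis
  have "Y interior_of (\<Union>N\<in>F. Y closure_of N) = {}"
  proof (rule Baire_category_alt)
    show "countable ((\<lambda>N. Y closure_of N) ` F)" using F(1) by simp
    show "closedin Y T \<and> Y interior_of T = {}" if "T \<in> (\<lambda>N. Y closure_of N) ` F" for T
      using that F(2) by (auto simp: nowhere_dense_in_def)
  qed (use Y in simp)
  moreover have "U \<subseteq> (\<Union>N\<in>F. Y closure_of N)"
  proof
    fix u assume "u \<in> U"
    then obtain N where "N \<in> F" "u \<in> N" using F(3) by blast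
    then show "u \<in> (\<Union>N\<in>F. Y closure_of N)"
      using F(2) closure_of_subset[of N Y] unfolding nowhere_dense_in_def by blast
  qed
  ultimately show False
    using interior_of_maximal[OF _ U(1)] U(2) by blast
qed

lemma homeomorphic_map_nowhere_dense_in:
  assumes f: "homeomorphic_map X Y f" and A: "nowhere_dense_in X A"
  shows "nowhere_dense_in Y (f ` A)"
proof -
  have A_sub: "A \<subseteq> topspace X" using A unfolding nowhere_dense_in_def by blast
  then have "Y interior_of (Y closure_of (f ` A)) = f ` (X interior_of (X closure_of A))"
    using homeomorphic_map_closure_of[OF f] homeomorphic_map_interior_of[OF f]
    by (simp add: closure_of_subset_topspace)
  moreover have "f ` A \<subseteq> topspace Y"
    using A_sub homeomorphic_imp_surjective_map[OF f] by blast
  ultimately show ?thesis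
    using A unfolding nowhere_dense_in_def by simp
qed

lemma homeomorphic_map_meager_in:
  assumes f: "homeomorphic_map X Y f" and A: "meager_in X A"
  shows "meager_in Y (f ` A)"
proof -
  obtain F where F: "A \<subseteq> topspace X" "countable F" "\<And>N. N \<in> F \<Longrightarrow> nowhere_dense_in X N" "A \<subseteq> \<Union>F"
    using A unfolding meager_in_def by blast
  show ?thesis
    unfolding meager_in_def
  proof (intro conjI exI[of _ "(\<lambda>N. f ` N) ` F"])
    show "f ` A \<subseteq> topspace Y"
      using F(1) homeomorphic_imp_surjective_map[OF f] by blast
    show "countable ((\<lambda>N. f ` N) ` F)" using F(2) by simp
    show "\<forall>N\<in>(\<lambda>N. f ` N) ` F. nowhere_dense_in Y N"
      using F(3) homeomorphic_map_nowhere_dense_in[OF f] by simp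
    show "f ` A \<subseteq> \<Union>((\<lambda>N. f ` N) ` F)" using F(4) by blast
  qed
qed

section \<open>The Baire property and a topological zero-one law\<close>

definition baire_property :: "'a topology \<Rightarrow> 'a set \<Rightarrow> bool" where
  "baire_property Y S \<longleftrightarrow> (\<exists>U. openin Y U \<and> meager_in Y (S - U) \<and> meager_in Y (U - S))"

definition meager_open_part :: "'a topology \<Rightarrow> 'a set \<Rightarrow> 'a set" where
  "meager_open_part Y S = \<Union>{W. openin Y W \<and> meager_in Y (W \<inter> S)}"

lemma openin_meager_open_part: "openin Y (meager_open_part Y S)"
  unfolding meager_open_part_def by (rule openin_Union) simp

lemma meager_open_part_maximal:
  "openin Y W \<Longrightarrow> meager_in Y (W \<inter> S) \<Longrightarrow> W \<subseteq> meager_open_part Y S"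
  unfolding meager_open_part_def by blast

lemma meager_in_Int_meager_open_part:
  assumes "second_countable Y"
  shows "meager_in Y (S \<inter> meager_open_part Y S)"
proof -
  obtain \<B> where \<B>: "countable \<B>" "\<And>U x. openin Y U \<Longrightarrow> x \<in> U \<Longrightarrow> \<exists>V\<in>\<B>. x \<in> V \<and> V \<subseteq> U"
    using assms unfolding second_countable_def by metis
  let ?\<M> = "(\<lambda>V. V \<inter> S) ` {V \<in> \<B>. meager_in Y (V \<inter> S)}"
  have "S \<inter> meager_open_part Y S \<subseteq> \<Union>?\<M>"
  proof
    fix x assume "x \<in> S \<inter> meager_open_part Y S"
    then obtain W where W: "openin Y W" "meager_in Y (W \<inter> S)" "x \<in> W" "x \<in> S"
      unfolding meager_open_part_def by blast
    then obtain V where V: "V \<in> \<B>" "x \<in> V" "V \<subseteq> W"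
      using \<B>(2) by blast
    then have "meager_in Y (V \<inter> S)"
      using meager_in_subset[OF W(2)] by blast
    then show "x \<in> \<Union>?\<M>" using V W(4) by blast
  qed
  moreover have "meager_in Y (\<Union>?\<M>)"
    by (rule meager_in_Union) (use \<B>(1) in auto)
  ultimately show ?thesis by (rule meager_in_subset[rotated])
qed

text \<open>The last assumption replaces the usual requirement that the sets \<open>A s\<close> be closed.
  Each \<open>A s\<close> differs by a meager set from the closed set \<open>essential_closure s\<close>, and the
  essential closures fail to split only on the nowhere dense sets \<open>defect s\<close>.\<close>

locale souslin_scheme =
  fixes Y :: "'a topology" and A :: "nat list \<Rightarrow> 'a set"
  assumes second_countable: "second_countable Y"
    and A_subset: "A s \<subseteq> topspace Y"
    and A_split: "A s = (\<Union>i. A (s @ [i]))"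
    and A_branch_closure: "(\<And>n. y \<in> Y closure_of A (map x [0..<n])) \<Longrightarrow> y \<in> A []"
begin

definition essential_closure :: "nat list \<Rightarrow> 'a set" where
  "essential_closure s = Y closure_of A s - meager_open_part Y (A s)"

definition defect :: "nat list \<Rightarrow> 'a set" where
  "defect s = essential_closure s - (\<Union>i. essential_closure (s @ [i]))"

lemma closedin_essential_closure: "closedin Y (essential_closure s)"
  unfolding essential_closure_def
  by (intro closedin_diff closedin_closure_of openin_meager_open_part)

lemma A_subset_essential_closure:
  "A s \<subseteq> essential_closure s \<union> (A s \<inter> meager_open_part Y (A s))"
  unfolding essential_closure_def using closure_of_subset[OF A_subset[of s]] by blast

lemma nowhere_dense_defect: "nowhere_dense_in Y (defect s)"
  unfolding nowhere_dense_in_def interior_of_eq_empty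
proof (intro conjI allI impI)
  show "defect s \<subseteq> topspace Y"
    using closedin_subset[OF closedin_essential_closure] unfolding defect_def by blast
  fix V assume V: "openin Y V \<and> V \<subseteq> Y closure_of defect s"
  then have V_sub: "V \<subseteq> essential_closure s"
    using closure_of_minimal[OF _ closedin_essential_closure, of "defect s" s]
    unfolding defect_def by blast
  have "nowhere_dense_in Y (V \<inter> essential_closure (s @ [i]))" for i
    using V by (intro nowhere_dense_in_Int_closedin[of Y V "defect s"] closedin_essential_closure)
      (auto simp: defect_def)
  then have "meager_in Y (\<Union>i. V \<inter> essential_closure (s @ [i]) \<union>
      A (s @ [i]) \<inter> meager_open_part Y (A (s @ [i])))"
    by (intro meager_in_UN meager_in_Un nowhere_dense_imp_meager_in
        meager_in_Int_meager_open_part second_countable) auto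
  moreover have "V \<inter> A s \<subseteq> (\<Union>i. V \<inter> essential_closure (s @ [i]) \<union>
      A (s @ [i]) \<inter> meager_open_part Y (A (s @ [i])))"
    using A_split[of s] A_subset_essential_closure by blast
  ultimately have "meager_in Y (V \<inter> A s)"
    by (rule meager_in_subset)
  then have "V \<subseteq> meager_open_part Y (A s)"
    using V by (intro meager_open_part_maximal) auto
  then show "V = {}"
    using V_sub unfolding essential_closure_def by blast
qed

lemma essential_closure_Nil_diff_defects: "essential_closure [] - (\<Union>s. defect s) \<subseteq> A []"
proof
  fix y assume y: "y \<in> essential_closure [] - (\<Union>s. defect s)"
  have split: "\<exists>i. y \<in> essential_closure (s @ [i])" if "y \<in> essential_closure s" for s
    using that y unfolding defect_def by blast
  define succ where "succ s = (SOME i. y \<in> essential_closure (s @ [i]))" for s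
  define branch where "branch n = rec_nat [] (\<lambda>_ s. s @ [succ s]) n" for n
  have branch_Suc: "branch (Suc n) = branch n @ [succ (branch n)]" for n
    unfolding branch_def by simp
  have y_branch: "y \<in> essential_closure (branch n)" for n
  proof (induction n)
    case 0
    then show ?case using y by (simp add: branch_def)
  next
    case (Suc n)
    then show ?case
      using someI_ex[OF split[OF Suc.IH]] by (simp add: branch_Suc succ_def)
  qed
  have branch_map: "branch n = map (\<lambda>k. succ (branch k)) [0..<n]" for n
    by (induction n) (simp_all add: branch_def branch_Suc)
  show "y \<in> A []"
  proof (rule A_branch_closure)
    fix n
    show "y \<in> Y closure_of A (map (\<lambda>k. succ (branch k)) [0..<n])"
      using y_branch[of n] unfolding branch_map[of n] essential_closure_def by blast
  qed
qed

theorem baire_property_Nil: "baire_property Y (A [])"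
  unfolding baire_property_def
proof (intro exI conjI)
  let ?Q = "Y interior_of essential_closure []"
  show "openin Y ?Q" by simp
  have "A [] - ?Q \<subseteq> A [] \<inter> meager_open_part Y (A []) \<union>
      (essential_closure [] - Y interior_of essential_closure [])"
    using A_subset_essential_closure[of "[]"] by blast
  moreover have "meager_in Y (A [] \<inter> meager_open_part Y (A []) \<union>
      (essential_closure [] - Y interior_of essential_closure []))"
    by (intro meager_in_Un meager_in_Int_meager_open_part second_countable
        nowhere_dense_imp_meager_in nowhere_dense_in_frontier closedin_essential_closure)
  ultimately show "meager_in Y (A [] - ?Q)"
    by (rule meager_in_subset[rotated])
  have "?Q - A [] \<subseteq> (\<Union>s. defect s)"
    using essential_closure_Nil_diff_defects interior_of_subset[of Y "essential_closure []"]
    by blast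
  moreover have "meager_in Y (\<Union>s. defect s)"
    by (intro meager_in_UN nowhere_dense_imp_meager_in nowhere_dense_defect) simp
  ultimately show "meager_in Y (?Q - A [])"
    by (rule meager_in_subset[rotated])
qed

end

lemma topological_zero_one_law:
  assumes Y: "completely_metrizable_space Y" and E: "baire_property Y E" "E \<subseteq> topspace Y"
    and invariant: "\<And>\<sigma>. \<sigma> \<in> S \<Longrightarrow> homeomorphic_map Y Y \<sigma> \<and> \<sigma> ` E = E"
    and transitive: "\<And>U V. openin Y U \<Longrightarrow> openin Y V \<Longrightarrow> U \<noteq> {} \<Longrightarrow> V \<noteq> {} \<Longrightarrow>
      \<exists>\<sigma>\<in>S. \<sigma> ` U \<inter> V \<noteq> {}"
  shows "meager_in Y E \<or> comeager_in Y E"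
proof -
  obtain Q where Q: "openin Y Q" "meager_in Y (E - Q)" "meager_in Y (Q - E)"
    using E(1) unfolding baire_property_def by blast
  show ?thesis
  proof (cases "Q = {}")
    case True
    then show ?thesis using Q(2) by simp
  next
    case False
    have dense: "Y closure_of Q = topspace Y"
    proof (rule ccontr)
      assume "Y closure_of Q \<noteq> topspace Y"
      then have V: "openin Y (topspace Y - Y closure_of Q)" "topspace Y - Y closure_of Q \<noteq> {}"
        using closure_of_subset_topspace[of Y Q] by auto
      then obtain \<sigma> where "\<sigma> \<in> S" and W_ne: "\<sigma> ` Q \<inter> (topspace Y - Y closure_of Q) \<noteq> {}"
        using transitive[OF Q(1)] False by blast
      then have \<sigma>: "homeomorphic_map Y Y \<sigma>" "\<sigma> ` E = E" using invariant by auto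
      let ?W = "\<sigma> ` Q \<inter> (topspace Y - Y closure_of Q)"
      have "openin Y ?W"
        using homeomorphic_imp_open_map[OF \<sigma>(1)] Q(1) V(1) unfolding open_map_def by blast
      moreover have "?W \<subseteq> \<sigma> ` (Q - E) \<union> (E - Q)"
        using \<sigma>(2) closure_of_subset[OF openin_subset[OF Q(1)]] by blast
      then have "meager_in Y ?W"
        by (rule meager_in_subset[rotated])
          (intro meager_in_Un homeomorphic_map_meager_in[OF \<sigma>(1)] Q(2,3))
      ultimately show False
        using completely_metrizable_imp_nonempty_open_not_meager[OF Y] W_ne by blast
    qed
    have "nowhere_dense_in Y (topspace Y - Q)"
      using Q(1) dense interior_of_complement[of Y Q] by (intro nowhere_dense_in_closedin) auto
    then have "meager_in Y ((topspace Y - Q) \<union> (Q - E))"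
      by (intro meager_in_Un nowhere_dense_imp_meager_in Q(3))
    then have "meager_in Y (topspace Y - E)"
      by (rule meager_in_subset) blast
    then show ?thesis
      unfolding comeager_in_def using E(2) by simp
  qed
qed

section \<open>The space of group tables\<close>

lemma second_countable_euclidean:
  "second_countable (euclidean :: 'a::second_countable_topology topology)"
proof -
  obtain \<B> :: "'a set set" where \<B>: "countable \<B>" "\<And>C. C \<in> \<B> \<Longrightarrow> open C"
    "\<And>S. open S \<Longrightarrow> \<exists>\<U>. \<U> \<subseteq> \<B> \<and> S = \<Union>\<U>"
    by (metis univ_second_countable)
  have "\<exists>V\<in>\<B>. x \<in> V \<and> V \<subseteq> U" if "open U" "x \<in> U" for U x
    using \<B>(3)[OF that(1)] that(2) by blast
  then show ?thesis
    unfolding second_countable_def using \<B>(1,2) by (intro exI[of _ \<B>]) simp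
qed

lemma countable_intersection_of_open:
  fixes P :: "'t::countable \<Rightarrow> 'a::topological_space set"
  assumes "\<And>t. open (P t)"
  shows "(countable intersection_of openin euclidean) (\<Inter>t. P t)"
  unfolding intersection_of_def by (rule exI[of _ "range P"]) (use assms in auto)

lemma completely_metrizable_space_fun_nat:
  "completely_metrizable_space (euclidean :: ('k::countable \<Rightarrow> nat) topology)"
proof -
  have "(euclidean :: nat topology) = discrete_topology UNIV"
    by (rule topology_eq[THEN iffD2]) (simp add: open_discrete)
  then have "completely_metrizable_space
      (product_topology (\<lambda>_::'k. (euclidean :: nat topology)) UNIV)"
    by (simp add: completely_metrizable_space_product_topology
        completely_metrizable_space_discrete_topology)
  then show ?thesis by (simp add: euclidean_product_topology)
qed

lemma open_fun_nat_if_finitely_determined: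
  fixes S :: "('k \<Rightarrow> nat) set"
  assumes "\<And>f. f \<in> S \<Longrightarrow> \<exists>K. finite K \<and> (\<forall>g. (\<forall>k\<in>K. g k = f k) \<longrightarrow> g \<in> S)"
  shows "open S"
proof -
  obtain K where K: "\<And>f. f \<in> S \<Longrightarrow> finite (K f) \<and> (\<forall>g. (\<forall>k\<in>K f. g k = f k) \<longrightarrow> g \<in> S)"
    using assms by metis
  have basic: "open {g. \<forall>k\<in>K f. g (id k) \<in> {f k}}" if "f \<in> S" for f
    by (rule product_topology_basis') (use K[OF that] in \<open>auto intro: open_discrete\<close>)
  have "S = (\<Union>f\<in>S. {g. \<forall>k\<in>K f. g (id k) \<in> {f k}})"
  proof
    show "S \<subseteq> (\<Union>f\<in>S. {g. \<forall>k\<in>K f. g (id k) \<in> {f k}})" by auto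
    show "(\<Union>f\<in>S. {g. \<forall>k\<in>K f. g (id k) \<in> {f k}}) \<subseteq> S" using K by auto
  qed
  also have "open \<dots>" using basic by (intro open_UN) auto
  finally show ?thesis .
qed

definition cylinder :: "('k \<times> nat) list \<Rightarrow> ('k \<Rightarrow> nat) set" where
  "cylinder ps = {f. \<forall>(k, v)\<in>set ps. f k = v}"

lemma open_cylinder: "open (cylinder ps)"
proof (rule open_fun_nat_if_finitely_determined)
  fix f assume "f \<in> cylinder ps"
  then show "\<exists>K. finite K \<and> (\<forall>g. (\<forall>k\<in>K. g k = f k) \<longrightarrow> g \<in> cylinder ps)"
    unfolding cylinder_def by (intro exI[of _ "fst ` set ps"]) force
qed

lemma cylinder_basis:
  fixes U :: "('k \<Rightarrow> nat) set"
  assumes "open U" "f \<in> U"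
  obtains ps where "f \<in> cylinder ps" "cylinder ps \<subseteq> U"
proof -
  have "openin (product_topology (\<lambda>_. euclidean) UNIV) U"
    using assms(1) by (simp add: euclidean_product_topology)
  from product_topology_open_contains_basis[OF this assms(2)]
  obtain X where X: "f \<in> (\<Pi>\<^sub>E k\<in>UNIV. X k)" "finite {k. X k \<noteq> UNIV}" "(\<Pi>\<^sub>E k\<in>UNIV. X k) \<subseteq> U"
    by auto
  obtain ks where ks: "set ks = {k. X k \<noteq> UNIV}" using finite_list[OF X(2)] by blast
  let ?ps = "map (\<lambda>k. (k, f k)) ks"
  have "cylinder ?ps \<subseteq> (\<Pi>\<^sub>E k\<in>UNIV. X k)"
  proof
    fix g assume g: "g \<in> cylinder ?ps"
    have "g k \<in> X k" for k
      using g X(1) ks by (cases "X k = UNIV") (auto simp: cylinder_def PiE_iff)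
    then show "g \<in> (\<Pi>\<^sub>E k\<in>UNIV. X k)" by (simp add: PiE_iff)
  qed
  then show thesis
    using that[of ?ps] X(3) by (auto simp: cylinder_def)
qed

lemma group_tables_iff:
  "A \<in> group_tables \<longleftrightarrow>
    (\<forall>x y z. A (A (x, y), z) = A (x, A (y, z))) \<and>
    (\<forall>x. A (0, x) = x \<and> A (x, 0) = x \<and> (\<exists>y. A (y, x) = 0 \<and> A (x, y) = 0))"
  unfolding group_tables_def table_group_def
  by (auto simp: group_def group_axioms_def monoid_def Units_def)

definition group_table_condition :: "nat \<times> nat \<times> nat \<Rightarrow> (nat \<times> nat \<Rightarrow> nat) set" where
  "group_table_condition t = (case t of (x, y, z) \<Rightarrow> {A. A (A (x, y), z) = A (x, A (y, z)) \<and>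
     A (0, x) = x \<and> A (x, 0) = x \<and> (\<exists>w. A (w, x) = 0 \<and> A (x, w) = 0)})"

lemma group_tables_eq_Inter: "group_tables = (\<Inter>t. group_table_condition t)"
  unfolding set_eq_iff group_tables_iff group_table_condition_def by auto

lemma open_group_table_condition: "open (group_table_condition t)"
proof (rule open_fun_nat_if_finitely_determined)
  fix A assume A: "A \<in> group_table_condition t"
  obtain x y z where t: "t = (x, y, z)" by (cases t) auto
  obtain w where w: "A (w, x) = 0" "A (x, w) = 0"
    using A unfolding t group_table_condition_def by auto
  show "\<exists>K. finite K \<and> (\<forall>B. (\<forall>k\<in>K. B k = A k) \<longrightarrow> B \<in> group_table_condition t)"
    by (rule exI[of _ "{(x, y), (y, z), (A (x, y), z), (x, A (y, z)),
        (0, x), (x, 0), (w, x), (x, w)}"])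
      (use A w in \<open>auto simp: t group_table_condition_def\<close>)
qed

lemma completely_metrizable_space_group_tables:
  "completely_metrizable_space (top_of_set group_tables)"
  unfolding group_tables_eq_Inter
  by (intro completely_metrizable_space_gdelta_in_alt[OF completely_metrizable_space_fun_nat]
      countable_intersection_of_open open_group_table_condition)

lemma second_countable_group_tables: "second_countable (top_of_set group_tables)"
  by (intro second_countable_subtopology second_countable_euclidean)

section \<open>Relabelling group tables\<close>

definition perms_fixing_zero :: "(nat \<Rightarrow> nat) set" where
  "perms_fixing_zero = {\<sigma>. bij \<sigma> \<and> \<sigma> 0 = 0}"

text \<open>\<open>inv_into UNIV\<close> is spelled out because HOL-Algebra takes over the notation \<open>inv\<close>.\<close>

definition permute_table :: "(nat \<Rightarrow> nat) \<Rightarrow> (nat \<times> nat \<Rightarrow> nat) \<Rightarrow> (nat \<times> nat \<Rightarrow> nat)" where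
  "permute_table \<sigma> A = (\<lambda>(x, y). \<sigma> (A (inv_into UNIV \<sigma> x, inv_into UNIV \<sigma> y)))"

lemma permute_table_apply [simp]:
  "permute_table \<sigma> A (x, y) = \<sigma> (A (inv_into UNIV \<sigma> x, inv_into UNIV \<sigma> y))"
  by (simp add: permute_table_def)

lemma permute_table_id [simp]: "permute_table id A = A"
  by (simp add: permute_table_def inv_id)

lemma permute_table_comp:
  assumes "bij \<sigma>" "bij \<tau>"
  shows "permute_table (\<sigma> \<circ> \<tau>) A = permute_table \<sigma> (permute_table \<tau> A)"
  by (simp add: permute_table_def fun_eq_iff o_inv_distrib[OF assms])

lemma permute_table_inv_cancel:
  assumes "bij \<sigma>"
  shows "permute_table (inv_into UNIV \<sigma>) (permute_table \<sigma> A) = A"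
    and "permute_table \<sigma> (permute_table (inv_into UNIV \<sigma>) A) = A"
proof -
  have "inv_into UNIV \<sigma> \<circ> \<sigma> = id" "\<sigma> \<circ> inv_into UNIV \<sigma> = id"
    using assms by (simp_all add: bij_is_inj inv_o_cancel bij_is_surj surj_iff[THEN iffD1])
  then show "permute_table (inv_into UNIV \<sigma>) (permute_table \<sigma> A) = A"
    and "permute_table \<sigma> (permute_table (inv_into UNIV \<sigma>) A) = A"
    using permute_table_comp[OF bij_imp_bij_inv[OF assms] assms, of A]
      permute_table_comp[OF assms bij_imp_bij_inv[OF assms], of A] by simp_all
qed

lemma perms_fixing_zero_inv:
  assumes "\<sigma> \<in> perms_fixing_zero"
  shows "inv_into UNIV \<sigma> \<in> perms_fixing_zero"
  using assms bij_imp_bij_inv inv_f_eq[of \<sigma> 0 0]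
  by (auto simp: perms_fixing_zero_def bij_is_inj)

lemma perms_fixing_zero_comp:
  "\<sigma> \<in> perms_fixing_zero \<Longrightarrow> \<tau> \<in> perms_fixing_zero \<Longrightarrow> \<sigma> \<circ> \<tau> \<in> perms_fixing_zero"
  by (auto simp: perms_fixing_zero_def bij_comp)

lemma permute_table_group_tables:
  assumes \<sigma>: "\<sigma> \<in> perms_fixing_zero" and A: "A \<in> group_tables"
  shows "permute_table \<sigma> A \<in> group_tables"
proof -
  have bij: "bij \<sigma>" and zero: "\<sigma> 0 = 0" "inv_into UNIV \<sigma> 0 = 0"
    using \<sigma> perms_fixing_zero_inv[OF \<sigma>] by (auto simp: perms_fixing_zero_def)
  have inv_cancel: "inv_into UNIV \<sigma> (\<sigma> x) = x" "\<sigma> (inv_into UNIV \<sigma> x) = x" for x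
    using bij by (simp_all add: bij_is_inj bij_is_surj surj_f_inv_f)
  have assoc: "A (A (x, y), z) = A (x, A (y, z))"
   and unit: "A (0, x) = x" "A (x, 0) = x"
   and inverse: "\<exists>y. A (y, x) = 0 \<and> A (x, y) = 0" for x y z
    using A unfolding group_tables_iff by auto
  show ?thesis
    unfolding group_tables_iff
  proof (intro conjI allI)
    fix x
    obtain y where "A (y, inv_into UNIV \<sigma> x) = 0" "A (inv_into UNIV \<sigma> x, y) = 0"
      using inverse by blast
    then show "\<exists>y. permute_table \<sigma> A (y, x) = 0 \<and> permute_table \<sigma> A (x, y) = 0"
      by (intro exI[of _ "\<sigma> y"]) (simp add: inv_cancel zero)
  qed (simp_all add: inv_cancel zero assoc unit)
qed

lemma permute_table_hom:
  "bij \<sigma> \<Longrightarrow> \<sigma> \<in> hom (table_group A) (table_group (permute_table \<sigma> A))"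
  by (simp add: hom_def table_group_def bij_is_inj)

lemma embeddable_permute_table:
  assumes "bij \<sigma>" "embeddable H (table_group A)"
  shows "embeddable H (table_group (permute_table \<sigma> A))"
proof -
  obtain f where f: "f \<in> hom H (table_group A)" "inj_on f (carrier H)"
    using assms(2) unfolding embeddable_def by blast
  have "\<sigma> \<circ> f \<in> hom H (table_group (permute_table \<sigma> A))"
    using f(1) permute_table_hom[OF assms(1), of A] by (simp add: hom_def Pi_def table_group_def)
  moreover have "inj_on (\<sigma> \<circ> f) (carrier H)"
    using comp_inj_on[OF f(2) inj_on_subset[OF bij_is_inj[OF assms(1)] subset_UNIV]] .
  ultimately show ?thesis unfolding embeddable_def by blast
qed

lemma continuous_on_permute_table: "continuous_on S (permute_table \<sigma>)"
proof (rule continuous_on_coordinatewise_then_product)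
  fix p :: "nat \<times> nat"
  obtain x y where p: "p = (x, y)" by (cases p)
  have "continuous_on S (\<sigma> \<circ> (\<lambda>A. A (inv_into UNIV \<sigma> x, inv_into UNIV \<sigma> y)))"
  proof (rule continuous_on_compose)
    show "continuous_on S (\<lambda>A. A (inv_into UNIV \<sigma> x, inv_into UNIV \<sigma> y))"
      by (rule continuous_on_product_then_coordinatewise[OF continuous_on_id])
    show "continuous_on ((\<lambda>A. A (inv_into UNIV \<sigma> x, inv_into UNIV \<sigma> y)) ` S) \<sigma>"
      by (rule Topological_Spaces.continuous_on_discrete)
  qed
  then show "continuous_on S (\<lambda>A. permute_table \<sigma> A p)"
    by (simp add: p o_def)
qed

lemma homeomorphic_map_permute_table:
  assumes \<sigma>: "\<sigma> \<in> perms_fixing_zero"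
  shows "homeomorphic_map (top_of_set group_tables) (top_of_set group_tables) (permute_table \<sigma>)"
proof -
  have continuous:
      "continuous_map (top_of_set group_tables) (top_of_set group_tables) (permute_table \<tau>)"
    if "\<tau> \<in> perms_fixing_zero" for \<tau>
    unfolding continuous_map_subtopology_eu
    using permute_table_group_tables[OF that] continuous_on_permute_table by blast
  have "homeomorphic_maps (top_of_set group_tables) (top_of_set group_tables)
      (permute_table \<sigma>) (permute_table (inv_into UNIV \<sigma>))"
    unfolding homeomorphic_maps_def
    using continuous[OF \<sigma>] continuous[OF perms_fixing_zero_inv[OF \<sigma>]] permute_table_inv_cancel \<sigma>
    by (auto simp: perms_fixing_zero_def)
  then show ?thesis
    using homeomorphic_map_maps by blast
qed

lemma permute_table_embeddable_tables:
  assumes \<sigma>: "\<sigma> \<in> perms_fixing_zero"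
  shows "permute_table \<sigma> ` {G \<in> group_tables. embeddable H (table_group G)} =
    {G \<in> group_tables. embeddable H (table_group G)}"
    (is "_ ` ?E = ?E")
proof
  have closed: "permute_table \<tau> ` ?E \<subseteq> ?E" if "\<tau> \<in> perms_fixing_zero" for \<tau>
    using that permute_table_group_tables embeddable_permute_table
    by (auto simp: perms_fixing_zero_def)
  show "permute_table \<sigma> ` ?E \<subseteq> ?E" by (rule closed[OF \<sigma>])
  have "permute_table \<sigma> ` permute_table (inv_into UNIV \<sigma>) ` ?E = ?E"
    using \<sigma> permute_table_inv_cancel(2) by (force simp: perms_fixing_zero_def image_comp)
  then show "?E \<subseteq> permute_table \<sigma> ` ?E"
    using closed[OF perms_fixing_zero_inv[OF \<sigma>]] by blast
qed

lemma bij_inverting_inj_on_finite: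
  assumes "finite F" "inj_on \<iota> F"
  obtains \<sigma> :: "'a \<Rightarrow> 'a" where "bij \<sigma>" "\<And>a. a \<in> F \<Longrightarrow> \<sigma> (\<iota> a) = a"
proof -
  have "\<exists>\<sigma>. bij \<sigma> \<and> (\<forall>a\<in>F. \<sigma> (\<iota> a) = a)"
    using assms
  proof (induction F rule: finite_induct)
    case empty
    show ?case using bij_id by blast
  next
    case (insert a F)
    have "inj_on \<iota> F" "\<iota> a \<notin> \<iota> ` F"
      using insert.prems insert.hyps(2) by (auto simp: inj_on_insert)
    then obtain \<sigma> where \<sigma>: "bij \<sigma>" "\<forall>c\<in>F. \<sigma> (\<iota> c) = c"
      using insert.IH by blast
    have a_new: "\<sigma> (\<iota> a) \<notin> F"
    proof
      assume F: "\<sigma> (\<iota> a) \<in> F"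
      then have "\<sigma> (\<iota> (\<sigma> (\<iota> a))) = \<sigma> (\<iota> a)"
        using \<sigma>(2) by blast
      then have "\<iota> (\<sigma> (\<iota> a)) = \<iota> a"
        using inj_eq[OF bij_is_inj[OF \<sigma>(1)]] by blast
      then show False
        using F \<open>\<iota> a \<notin> \<iota> ` F\<close> by (metis image_eqI)
    qed
    let ?\<sigma> = "Transposition.transpose (\<sigma> (\<iota> a)) a \<circ> \<sigma>"
    have "bij ?\<sigma>" using \<sigma>(1) by (simp add: bij_comp)
    moreover have "?\<sigma> (\<iota> c) = c" if "c \<in> insert a F" for c
    proof (cases "c = a")
      case False
      then have "c \<in> F" "\<sigma> (\<iota> c) = c" using that \<sigma>(2) by auto
      moreover have "c \<noteq> \<sigma> (\<iota> a)" "c \<noteq> a"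
        using \<open>c \<in> F\<close> a_new insert.hyps(2) by auto
      ultimately show ?thesis by simp
    qed simp
    ultimately show ?case by blast
  qed
  then show thesis using that by blast
qed

definition product_table :: "(nat \<times> nat \<Rightarrow> nat) \<Rightarrow> (nat \<times> nat \<Rightarrow> nat) \<Rightarrow> (nat \<times> nat \<Rightarrow> nat)" where
  "product_table G1 G2 = (\<lambda>(a, b). prod_encode
     (G1 (fst (prod_decode a), fst (prod_decode b)),
      G2 (snd (prod_decode a), snd (prod_decode b))))"

lemma product_table_apply [simp]:
  "product_table G1 G2 (a, b) = prod_encode
     (G1 (fst (prod_decode a), fst (prod_decode b)),
      G2 (snd (prod_decode a), snd (prod_decode b)))"
  by (simp add: product_table_def)

lemma prod_encode_0_0 [simp]: "prod_encode (0, 0) = 0"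
  by (simp add: prod_encode_def)

lemma prod_decode_0 [simp]: "prod_decode 0 = (0, 0)"
  using prod_encode_inverse[of "(0, 0)"] by simp

lemma product_table_group_tables:
  assumes G1: "G1 \<in> group_tables" and G2: "G2 \<in> group_tables"
  shows "product_table G1 G2 \<in> group_tables"
proof -
  have assoc: "G1 (G1 (x, y), z) = G1 (x, G1 (y, z))" "G2 (G2 (x, y), z) = G2 (x, G2 (y, z))"
   and unit: "G1 (0, x) = x" "G1 (x, 0) = x" "G2 (0, x) = x" "G2 (x, 0) = x"
   and inverse: "\<exists>y. G1 (y, x) = 0 \<and> G1 (x, y) = 0" "\<exists>y. G2 (y, x) = 0 \<and> G2 (x, y) = 0"
    for x y z
    using G1 G2 unfolding group_tables_iff by auto
  show ?thesis
    unfolding group_tables_iff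
  proof (intro conjI allI)
    fix x
    obtain y1 where "G1 (y1, fst (prod_decode x)) = 0" "G1 (fst (prod_decode x), y1) = 0"
      using inverse(1) by blast
    moreover obtain y2 where "G2 (y2, snd (prod_decode x)) = 0" "G2 (snd (prod_decode x), y2) = 0"
      using inverse(2) by blast
    ultimately show "\<exists>y. product_table G1 G2 (y, x) = 0 \<and> product_table G1 G2 (x, y) = 0"
      by (intro exI[of _ "prod_encode (y1, y2)"]) simp
  qed (simp_all add: assoc unit)
qed

lemma relabel_into_cylinder:
  assumes G: "G \<in> cylinder ps" and \<iota>: "inj \<iota>" "\<iota> 0 = 0"
    and hom: "\<And>a b. T (\<iota> a, \<iota> b) = \<iota> (G (a, b))"
  shows "\<exists>\<sigma>\<in>perms_fixing_zero. permute_table \<sigma> T \<in> cylinder ps"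
proof -
  let ?F = "insert 0 (fst ` fst ` set ps \<union> snd ` fst ` set ps \<union> snd ` set ps)"
  have "finite ?F" by simp
  moreover have "inj_on \<iota> ?F" using \<iota>(1) by (rule inj_on_subset) simp
  ultimately obtain \<sigma> where \<sigma>: "bij \<sigma>" "\<And>a. a \<in> ?F \<Longrightarrow> \<sigma> (\<iota> a) = a"
    by (rule bij_inverting_inj_on_finite) (rule that)
  have inv_\<sigma>: "inv_into UNIV \<sigma> a = \<iota> a" if "a \<in> ?F" for a
    using inv_f_eq[OF bij_is_inj[OF \<sigma>(1)] \<sigma>(2)[OF that]] .
  have "permute_table \<sigma> T \<in> cylinder ps"
    unfolding cylinder_def
  proof clarsimp
    fix a b v assume abv: "((a, b), v) \<in> set ps"
    have ab: "(a, b) \<in> fst ` set ps" and "v \<in> snd ` set ps"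
      using abv by (auto intro: rev_image_eqI)
    moreover have "a \<in> fst ` fst ` set ps" "b \<in> snd ` fst ` set ps"
      using ab by (auto intro: rev_image_eqI)
    ultimately have "a \<in> ?F" "b \<in> ?F" "v \<in> ?F"
      by blast+
    moreover have "G (a, b) = v" using G abv unfolding cylinder_def by auto
    ultimately show "\<sigma> (T (inv_into UNIV \<sigma> a, inv_into UNIV \<sigma> b)) = v"
      by (simp add: inv_\<sigma> hom \<sigma>(2))
  qed
  moreover have "\<sigma> 0 = 0" using \<sigma>(2)[of 0] \<iota>(2) by simp
  ultimately show ?thesis
    using \<sigma>(1) unfolding perms_fixing_zero_def by blast
qed

lemma permute_table_images_meet:
  assumes \<sigma>1: "\<sigma>1 \<in> perms_fixing_zero" and \<sigma>2: "\<sigma>2 \<in> perms_fixing_zero"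
    and "permute_table \<sigma>1 T \<in> U" "permute_table \<sigma>2 T \<in> V"
  shows "\<exists>\<sigma>\<in>perms_fixing_zero. permute_table \<sigma> ` U \<inter> V \<noteq> {}"
proof -
  have bij: "bij \<sigma>1" "bij \<sigma>2" using \<sigma>1 \<sigma>2 by (auto simp: perms_fixing_zero_def)
  let ?\<tau> = "\<sigma>2 \<circ> inv_into UNIV \<sigma>1"
  have "permute_table ?\<tau> (permute_table \<sigma>1 T) = permute_table \<sigma>2 T"
    using permute_table_comp[OF bij(2) bij_imp_bij_inv[OF bij(1)]]
      permute_table_inv_cancel(1)[OF bij(1)]
    by simp
  then have "permute_table \<sigma>2 T \<in> permute_table ?\<tau> ` U"
    using assms(3) by (metis image_eqI)
  moreover have "?\<tau> \<in> perms_fixing_zero"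
    by (intro perms_fixing_zero_comp perms_fixing_zero_inv \<sigma>1 \<sigma>2)
  ultimately show ?thesis
    using assms(4) by (intro bexI[of _ ?\<tau>]) auto
qed

lemma openin_group_tables_contains_cylinder:
  assumes "openin (top_of_set group_tables) W" "W \<noteq> {}"
  obtains u ps where "u \<in> group_tables" "u \<in> cylinder ps" "group_tables \<inter> cylinder ps \<subseteq> W"
proof -
  obtain T where T: "open T" "W = group_tables \<inter> T"
    using assms(1) by (auto simp: openin_open)
  obtain u where u: "u \<in> W" using assms(2) by blast
  then obtain ps where "u \<in> cylinder ps" "cylinder ps \<subseteq> T"
    using cylinder_basis[OF T(1)] T(2) by blast
  then show thesis using that T(2) u by blast
qed

text \<open>Two nonempty basic open sets prescribe finitely many entries of tables \<open>u\<close> and \<open>w\<close>;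
  both groups embed into the direct product, which can therefore be relabelled so as to
  agree with either of them on the prescribed entries.\<close>

lemma permute_table_topologically_transitive:
  assumes U: "openin (top_of_set group_tables) U" "U \<noteq> {}"
    and V: "openin (top_of_set group_tables) V" "V \<noteq> {}"
  shows "\<exists>\<sigma>\<in>perms_fixing_zero. permute_table \<sigma> ` U \<inter> V \<noteq> {}"
proof -
  obtain u p where u: "u \<in> group_tables" "u \<in> cylinder p" "group_tables \<inter> cylinder p \<subseteq> U"
    using openin_group_tables_contains_cylinder[OF U] .
  obtain w q where w: "w \<in> group_tables" "w \<in> cylinder q" "group_tables \<inter> cylinder q \<subseteq> V"
    using openin_group_tables_contains_cylinder[OF V] .
  let ?T = "product_table u w"
  have T: "?T \<in> group_tables" using u(1) w(1) by (rule product_table_group_tables)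
  have "u (0, 0) = 0" "w (0, 0) = 0"
    using u(1) w(1) unfolding group_tables_iff by simp_all
  have "inj (\<lambda>a. prod_encode (a, 0))" "inj (\<lambda>a. prod_encode (0, a))"
    by (simp_all add: inj_def)
  moreover have "?T (prod_encode (a, 0), prod_encode (b, 0)) = prod_encode (u (a, b), 0)"
    and "?T (prod_encode (0, a), prod_encode (0, b)) = prod_encode (0, w (a, b))" for a b
    using \<open>u (0, 0) = 0\<close> \<open>w (0, 0) = 0\<close> by simp_all
  ultimately obtain \<sigma>1 \<sigma>2
    where \<sigma>1: "\<sigma>1 \<in> perms_fixing_zero" "permute_table \<sigma>1 ?T \<in> cylinder p"
      and \<sigma>2: "\<sigma>2 \<in> perms_fixing_zero" "permute_table \<sigma>2 ?T \<in> cylinder q"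
    using relabel_into_cylinder[where \<iota> = "\<lambda>a. prod_encode (a, 0)", OF u(2)]
      relabel_into_cylinder[where \<iota> = "\<lambda>a. prod_encode (0, a)", OF w(2)]
    by (metis prod_encode_0_0)
  have "permute_table \<sigma>1 ?T \<in> U"
    using u(3) \<sigma>1(2) permute_table_group_tables[OF \<sigma>1(1) T] by blast
  moreover have "permute_table \<sigma>2 ?T \<in> V"
    using w(3) \<sigma>2(2) permute_table_group_tables[OF \<sigma>2(1) T] by blast
  ultimately show ?thesis
    by (rule permute_table_images_meet[OF \<sigma>1(1) \<sigma>2(1)])
qed

lemma permute_table_invariant_meager_or_comeager:
  assumes "E \<subseteq> group_tables" "baire_property (top_of_set group_tables) E"
    and "\<And>\<sigma>. \<sigma> \<in> perms_fixing_zero \<Longrightarrow> permute_table \<sigma> ` E = E"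
  shows "meager_in (top_of_set group_tables) E \<or> comeager_in (top_of_set group_tables) E"
proof (rule topological_zero_one_law[where S = "permute_table ` perms_fixing_zero"])
  show "\<exists>\<tau>\<in>permute_table ` perms_fixing_zero. \<tau> ` U \<inter> V \<noteq> {}"
    if "openin (top_of_set group_tables) U" "openin (top_of_set group_tables) V"
      "U \<noteq> {}" "V \<noteq> {}" for U V
    using permute_table_topologically_transitive[OF that(1,3,2,4)] by blast
qed (use assms completely_metrizable_space_group_tables homeomorphic_map_permute_table in auto)

section \<open>Embeddability\<close>

text \<open>Given an enumeration \<open>e\<close> of \<open>H\<close>, an embedding of \<open>H\<close> into the group with table \<open>G\<close>
  is recorded by the sequence \<open>x\<close> of the images of \<open>e 0, e 1, \<dots>\<close>.\<close>

definition indexed_embedding ::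
    "('h, 'c) monoid_scheme \<Rightarrow> (nat \<Rightarrow> 'h) \<Rightarrow> (nat \<times> nat \<Rightarrow> nat) \<Rightarrow> (nat \<Rightarrow> nat) \<Rightarrow> bool" where
  "indexed_embedding H e G x \<longleftrightarrow> (\<forall>i j. x i = x j \<longleftrightarrow> e i = e j) \<and>
     (\<forall>i j k. e k = e i \<otimes>\<^bsub>H\<^esub> e j \<longrightarrow> x k = G (x i, x j))"

lemma embeddable_iff_indexed_embedding:
  assumes H: "monoid H" and e: "range e = carrier H"
  shows "embeddable H (table_group G) \<longleftrightarrow> (\<exists>x. indexed_embedding H e G x)"
proof
  assume "embeddable H (table_group G)"
  then obtain f where f: "f \<in> hom H (table_group G)" "inj_on f (carrier H)"
    unfolding embeddable_def by blast
  have f_mult: "f (a \<otimes>\<^bsub>H\<^esub> b) = G (f a, f b)" if "a \<in> carrier H" "b \<in> carrier H" for a b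
    using f(1) that unfolding hom_def table_group_def by simp
  have e_carrier: "e i \<in> carrier H" for i
    using e by blast
  have "indexed_embedding H e G (f \<circ> e)"
    using f(2) f_mult e_carrier unfolding indexed_embedding_def inj_on_def by auto
  then show "\<exists>x. indexed_embedding H e G x" by blast
next
  assume "\<exists>x. indexed_embedding H e G x"
  then obtain x where x: "indexed_embedding H e G x" by blast
  let ?index = "inv_into UNIV e"
  have e_index: "e (?index a) = a" if "a \<in> carrier H" for a
    using that e by (simp add: f_inv_into_f)
  have "x \<circ> ?index \<in> hom H (table_group G)"
    using x e_index monoid.m_closed[OF H]
    unfolding hom_def table_group_def indexed_embedding_def by auto
  moreover have "inj_on (x \<circ> ?index) (carrier H)"
    using x e_index unfolding indexed_embedding_def inj_on_def by (metis comp_apply)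
  ultimately show "embeddable H (table_group G)"
    unfolding embeddable_def by blast
qed

definition embedding_scheme ::
    "('h, 'c) monoid_scheme \<Rightarrow> (nat \<Rightarrow> 'h) \<Rightarrow> nat list \<Rightarrow> (nat \<times> nat \<Rightarrow> nat) set" where
  "embedding_scheme H e s =
     {G \<in> group_tables. \<exists>x. map x [0..<length s] = s \<and> indexed_embedding H e G x}"

lemma embedding_scheme_split: "embedding_scheme H e s = (\<Union>i. embedding_scheme H e (s @ [i]))"
proof
  show "embedding_scheme H e s \<subseteq> (\<Union>i. embedding_scheme H e (s @ [i]))"
  proof
    fix G assume "G \<in> embedding_scheme H e s"
    then obtain x where "G \<in> group_tables" "map x [0..<length s] = s" "indexed_embedding H e G x"
      unfolding embedding_scheme_def by blast
    then have "G \<in> embedding_scheme H e (s @ [x (length s)])"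
      unfolding embedding_scheme_def by auto
    then show "G \<in> (\<Union>i. embedding_scheme H e (s @ [i]))" by blast
  qed
  show "(\<Union>i. embedding_scheme H e (s @ [i])) \<subseteq> embedding_scheme H e s"
    unfolding embedding_scheme_def by auto
qed

lemma embedding_scheme_branch_closure:
  assumes y: "\<And>n. y \<in> top_of_set group_tables closure_of embedding_scheme H e (map x [0..<n])"
  shows "y \<in> embedding_scheme H e []"
proof -
  have y_tables: "y \<in> group_tables"
    using y[of 0] by (simp add: in_closure_of)
  have approx: "\<exists>z x'. z (x i, x j) = y (x i, x j) \<and> x' i = x i \<and> x' j = x j \<and> x' k = x k \<and>
      indexed_embedding H e z x'" for i j k
  proof -
    let ?n = "Suc (max i (max j k))" and ?T = "group_tables \<inter> cylinder [((x i, x j), y (x i, x j))]"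
    have "openin (top_of_set group_tables) ?T"
      using open_cylinder by blast
    moreover have "y \<in> ?T"
      using y_tables by (simp add: cylinder_def)
    ultimately obtain z where "z \<in> embedding_scheme H e (map x [0..<?n])" "z \<in> ?T"
      using y[of ?n] unfolding in_closure_of by blast
    then obtain x' where x': "map x' [0..<?n] = map x [0..<?n]" "indexed_embedding H e z x'"
      "z (x i, x j) = y (x i, x j)"
      unfolding embedding_scheme_def cylinder_def by auto
    have "x' m = x m" if "m < ?n" for m
      using arg_cong[OF x'(1), of "\<lambda>l. l ! m"] that by (simp del: upt_Suc)
    then show ?thesis
      using x'(2,3) by (intro exI[of _ z] exI[of _ x']) simp
  qed
  have "indexed_embedding H e y x"
    unfolding indexed_embedding_def
  proof (intro conjI allI impI)
    fix i j
    obtain z x' where "x' i = x i" "x' j = x j" "indexed_embedding H e z x'"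
      using approx[of i j i] by blast
    then show "x i = x j \<longleftrightarrow> e i = e j"
      unfolding indexed_embedding_def by metis
  next
    fix i j k assume "e k = e i \<otimes>\<^bsub>H\<^esub> e j"
    moreover obtain z x' where "z (x i, x j) = y (x i, x j)" "x' i = x i" "x' j = x j" "x' k = x k"
      "indexed_embedding H e z x'"
      using approx[of i j k] by blast
    ultimately show "x k = y (x i, x j)"
      unfolding indexed_embedding_def by metis
  qed
  then show ?thesis
    using y_tables unfolding embedding_scheme_def by auto
qed

lemma souslin_scheme_embedding_scheme:
  "souslin_scheme (top_of_set group_tables) (embedding_scheme H e)"
proof
  show "second_countable (top_of_set group_tables)"
    by (rule second_countable_group_tables)
  show "embedding_scheme H e s \<subseteq> topspace (top_of_set group_tables)" for s
    unfolding embedding_scheme_def by auto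
qed (fact embedding_scheme_split, fact embedding_scheme_branch_closure)

lemma embedding_scheme_Nil:
  assumes "monoid H" "range e = carrier H"
  shows "embedding_scheme H e [] = {G \<in> group_tables. embeddable H (table_group G)}"
  unfolding embedding_scheme_def using embeddable_iff_indexed_embedding[OF assms] by auto

lemma baire_property_embeddable_tables:
  fixes H :: "('h, 'c) monoid_scheme" and e :: "nat \<Rightarrow> 'h"
  assumes "monoid H" "range e = carrier H"
  shows "baire_property (top_of_set group_tables) {G \<in> group_tables. embeddable H (table_group G)}"
  using souslin_scheme.baire_property_Nil[OF souslin_scheme_embedding_scheme[of H e]]
  unfolding embedding_scheme_Nil[OF assms] .

lemma homeomorphic_map_onto_pullback_topology:
  assumes j: "inj_on j (topspace P)"
  shows "homeomorphic_map P (pullback_topology (j ` topspace P) (inv_into (topspace P) j) P) j"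
proof -
  let ?k = "inv_into (topspace P) j"
  let ?X = "pullback_topology (j ` topspace P) ?k P"
  have "continuous_map P P (?k \<circ> j)"
    using j by (intro continuous_map_eq[OF continuous_map_id]) simp
  then have "continuous_map P ?X j"
    by (rule continuous_map_pullback') auto
  moreover have "continuous_map ?X P (id \<circ> ?k)"
    by (rule continuous_map_pullback[OF continuous_map_id])
  moreover have "topspace ?X = j ` topspace P"
    by (auto simp: topspace_pullback_topology inv_into_into)
  ultimately have "homeomorphic_maps P ?X j ?k"
    using j unfolding homeomorphic_maps_def by (auto simp: f_inv_into_f)
  then show ?thesis
    using homeomorphic_map_maps by blast
qed

lemma analytic_in_continuous_image:
  fixes P :: "'a topology" and j :: "'a \<Rightarrow> nat \<Rightarrow> real"
  assumes P: "Polish_space P" and j: "inj_on j (topspace P)"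
    and g: "continuous_map P Y g" "g ` topspace P = S"
  shows "analytic_in Y S"
proof -
  let ?k = "inv_into (topspace P) j"
  let ?X = "pullback_topology (j ` topspace P) ?k P"
  have homeo: "homeomorphic_map P ?X j"
    by (rule homeomorphic_map_onto_pullback_topology[OF j])
  then have "P homeomorphic_space ?X"
    using homeomorphic_map_imp_homeomorphic_space by blast
  then have "Polish_space ?X"
    using P homeomorphic_completely_metrizable_space homeomorphic_separable_space
    unfolding Polish_space_def by blast
  moreover have "topspace ?X \<in> borel_sets_of ?X"
    unfolding borel_sets_of_def by (rule sigma_sets_top)
  moreover have "continuous_map (subtopology ?X (topspace ?X)) Y (g \<circ> ?k)"
    using continuous_map_pullback[OF g(1)] by simp
  moreover have "(g \<circ> ?k) ` topspace ?X = S"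
    using g(2) j homeomorphic_imp_surjective_map[OF homeo] by (auto simp: image_comp)
  ultimately show ?thesis
    unfolding analytic_in_def by blast
qed

lemma analytic_in_empty: "analytic_in Y {}"
proof -
  have "Polish_space (discrete_topology ({} :: (nat \<Rightarrow> real) set))"
    unfolding Polish_space_def
    by (simp add: completely_metrizable_space_discrete_topology separable_space_discrete_topology)
  moreover have "{} \<in> borel_sets_of (discrete_topology ({} :: (nat \<Rightarrow> real) set))"
    unfolding borel_sets_of_def by (rule sigma_sets.Empty)
  ultimately show ?thesis
    unfolding analytic_in_def by (auto simp: continuous_map_def)
qed

definition table_of_code :: "(nat \<Rightarrow> nat) \<Rightarrow> (nat \<times> nat \<Rightarrow> nat)" where
  "table_of_code w = (\<lambda>p. w (2 * prod_encode p))"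

definition witness_of_code :: "(nat \<Rightarrow> nat) \<Rightarrow> (nat \<Rightarrow> nat)" where
  "witness_of_code w = (\<lambda>m. w (2 * m + 1))"

definition embedding_codes :: "('h, 'c) monoid_scheme \<Rightarrow> (nat \<Rightarrow> 'h) \<Rightarrow> (nat \<Rightarrow> nat) set" where
  "embedding_codes H e = {w. table_of_code w \<in> group_tables \<and>
     indexed_embedding H e (table_of_code w) (witness_of_code w)}"

definition embedding_code_condition ::
    "('h, 'c) monoid_scheme \<Rightarrow> (nat \<Rightarrow> 'h) \<Rightarrow> nat \<times> nat \<times> nat \<Rightarrow> (nat \<Rightarrow> nat) set" where
  "embedding_code_condition H e t = (case t of (i, j, k) \<Rightarrow>
     table_of_code -` group_table_condition t \<inter>
     {w. witness_of_code w i = witness_of_code w j \<longleftrightarrow> e i = e j} \<inter>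
     {w. e k = e i \<otimes>\<^bsub>H\<^esub> e j \<longrightarrow>
        witness_of_code w k = table_of_code w (witness_of_code w i, witness_of_code w j)})"

lemma continuous_on_table_of_code: "continuous_on S table_of_code"
  unfolding table_of_code_def
  by (intro continuous_on_coordinatewise_then_product
      continuous_on_product_then_coordinatewise[OF continuous_on_id])

lemma open_embedding_code_condition: "open (embedding_code_condition H e t)"
proof -
  obtain i j k where t: "t = (i, j, k)" by (cases t) auto
  have "open (table_of_code -` group_table_condition t)"
    using continuous_on_open_vimage[of UNIV table_of_code] continuous_on_table_of_code
      open_group_table_condition by simp
  moreover have "open {w. witness_of_code w i = witness_of_code w j \<longleftrightarrow> e i = e j}"
    by (rule open_fun_nat_if_finitely_determined, rule exI[of _ "{2 * i + 1, 2 * j + 1}"])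
      (simp add: witness_of_code_def)
  moreover have "open {w. e k = e i \<otimes>\<^bsub>H\<^esub> e j \<longrightarrow>
      witness_of_code w k = table_of_code w (witness_of_code w i, witness_of_code w j)}"
  proof (rule open_fun_nat_if_finitely_determined)
    fix w
    let ?K = "{2 * i + 1, 2 * j + 1, 2 * k + 1, 2 * prod_encode (w (2 * i + 1), w (2 * j + 1))}"
    show "\<exists>K. finite K \<and> (\<forall>v. (\<forall>m\<in>K. v m = w m) \<longrightarrow> v \<in> {w. e k = e i \<otimes>\<^bsub>H\<^esub> e j \<longrightarrow>
        witness_of_code w k = table_of_code w (witness_of_code w i, witness_of_code w j)})"
      if "w \<in> {w. e k = e i \<otimes>\<^bsub>H\<^esub> e j \<longrightarrow>
        witness_of_code w k = table_of_code w (witness_of_code w i, witness_of_code w j)}"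
      using that by (intro exI[of _ ?K]) (simp add: witness_of_code_def table_of_code_def)
  qed
  ultimately show ?thesis
    unfolding embedding_code_condition_def t by (simp add: open_Int)
qed

lemma embedding_codes_eq_Inter: "embedding_codes H e = (\<Inter>t. embedding_code_condition H e t)"
  unfolding embedding_codes_def embedding_code_condition_def indexed_embedding_def
    group_tables_eq_Inter
  by auto

lemma Polish_space_embedding_codes: "Polish_space (top_of_set (embedding_codes H e))"
  unfolding Polish_space_def
proof
  show "completely_metrizable_space (top_of_set (embedding_codes H e))"
    unfolding embedding_codes_eq_Inter
    by (intro completely_metrizable_space_gdelta_in_alt[OF completely_metrizable_space_fun_nat]
        countable_intersection_of_open open_embedding_code_condition)
  show "separable_space (top_of_set (embedding_codes H e))"
    by (intro second_countable_imp_separable_space second_countable_subtopology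
        second_countable_euclidean)
qed

lemma table_of_code_embedding_codes:
  assumes "monoid H" "range e = carrier H"
  shows "table_of_code ` embedding_codes H e = {G \<in> group_tables. embeddable H (table_group G)}"
proof
  show "table_of_code ` embedding_codes H e \<subseteq> {G \<in> group_tables. embeddable H (table_group G)}"
    unfolding embedding_codes_def using embeddable_iff_indexed_embedding[OF assms] by auto
  show "{G \<in> group_tables. embeddable H (table_group G)} \<subseteq> table_of_code ` embedding_codes H e"
  proof
    fix G assume G: "G \<in> {G \<in> group_tables. embeddable H (table_group G)}"
    then obtain x where x: "indexed_embedding H e G x"
      using embeddable_iff_indexed_embedding[OF assms] by blast
    define w where "w n = (if even n then G (prod_decode (n div 2)) else x (n div 2))" for n
    have "table_of_code w = G" "witness_of_code w = x"
      unfolding table_of_code_def witness_of_code_def w_def by (simp_all add: fun_eq_iff)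
    then show "G \<in> table_of_code ` embedding_codes H e"
      using G x unfolding embedding_codes_def
      by (metis (mono_tags, lifting) mem_Collect_eq image_eqI)
  qed
qed

lemma analytic_embeddable_tables:
  fixes H :: "('h, 'c) monoid_scheme" and e :: "nat \<Rightarrow> 'h"
  assumes "monoid H" "range e = carrier H"
  shows "analytic_in (top_of_set group_tables) {G \<in> group_tables. embeddable H (table_group G)}"
proof (rule analytic_in_continuous_image[OF Polish_space_embedding_codes])
  show "inj_on (\<lambda>w n. real (w n)) (topspace (top_of_set (embedding_codes H e)))"
    by (auto simp: inj_on_def fun_eq_iff)
  show "continuous_map (top_of_set (embedding_codes H e)) (top_of_set group_tables) table_of_code"
    unfolding continuous_map_subtopology_eu
    using continuous_on_table_of_code by (auto simp: embedding_codes_def)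
  show "table_of_code ` topspace (top_of_set (embedding_codes H e)) =
      {G \<in> group_tables. embeddable H (table_group G)}"
    using table_of_code_embedding_codes[OF assms] by simp
qed

lemma embeddable_table_group_imp_countable:
  assumes "embeddable H (table_group G)"
  shows "countable (carrier H)"
proof -
  obtain f :: "_ \<Rightarrow> nat" where "inj_on f (carrier H)"
    using assms unfolding embeddable_def by blast
  then show ?thesis
    using countable_image_inj_on[of f "carrier H"] by simp
qed

theorem theorem5p7:
  fixes H :: "('h, 'c) monoid_scheme"
  assumes "group H"
  defines "E \<equiv> {G \<in> group_tables. embeddable H (table_group G)}"
  shows "analytic_in (top_of_set group_tables) E \<and>
         (meager_in (top_of_set group_tables) E \<or> comeager_in (top_of_set group_tables) E)"
proof (cases "countable (carrier H)")
  case True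
  have H: "monoid H" using assms(1) by (rule group.is_monoid)
  then have "carrier H \<noteq> {}" using monoid.one_closed by blast
  then obtain e :: "nat \<Rightarrow> 'h" where e: "range e = carrier H"
    using range_from_nat_into[OF _ True] by blast
  have "meager_in (top_of_set group_tables) E \<or> comeager_in (top_of_set group_tables) E"
    unfolding E_def
    using baire_property_embeddable_tables[OF H e] permute_table_embeddable_tables
    by (intro permute_table_invariant_meager_or_comeager) auto
  then show ?thesis
    using analytic_embeddable_tables[OF H e] unfolding E_def by blast
next
  case False
  then have "E = {}"
    unfolding E_def using embeddable_table_group_imp_countable by blast
  then show ?thesis
    by (simp add: analytic_in_empty meager_in_empty)
qed

end
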